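(* Let $\xi=e^{i\pi/5}\in\mathbb{C}$, $\tau=\frac{1+\sqrt5}{2}$, $\tau'=\frac{1-\sqrt5}{2}$. For $n\in\mathbb{N}_0$ let $Q_2(n)=\{\sum_{j=0}^9 n_j\xi^j: n_j\in\mathbb{N}_0,\ \sum_j n_j\le n\}$ and $L(n)=Q_2(n)\cap\mathbb{R}$. Then $L(2)\setminus L(1)=\{\pm2,\pm\tau,\pm\tau'\}$.
   Context: $Q_2(n)$ is the $H_2^{\mathrm{aff}}$-induced quasicrystal fragment (all linear combinations of at most $n$ tenth roots of unity with nonnegative integer coefficients); $L(n)$ is its intersection with the real line, denoted $L_{\alpha_1}(n)$ in the paper. *)

theory Defs
  imports "HOL-Analysis.Analysis"
begin

definition xi :: complex where
  "xi = exp (\<i> * complex_of_real (pi / 5))"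

definition tau :: real where
  "tau = (1 + sqrt 5) / 2"

definition tau' :: real where
  "tau' = (1 - sqrt 5) / 2"

definition Q2 :: "nat \<Rightarrow> complex set" where
  "Q2 n = {z. \<exists>c :: nat \<Rightarrow> nat. (\<Sum>j<10. c j) \<le> n \<and>
                 z = (\<Sum>j<10. of_nat (c j) * xi ^ j)}"

definition L :: "nat \<Rightarrow> real set" where
  "L n = {x. complex_of_real x \<in> Q2 n}"

end

theory Submission
  imports Defs
begin

(* Q2(2) consists of 0, the tenth roots of unity xi^a and the sums xi^a + xi^b.  Two complex
   numbers of equal modulus have a real sum only if they are conjugate or opposite, so the real
   points of Q2(2) outside L(1) = {0, 1, -1} are the numbers 2 cos (a pi / 5).  Since
   cos (3 pi / 5) = - cos (2 pi / 5), the triple and double angle formulas make 2 cos (pi / 5) the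
   positive root tau of x^2 = x + 1, and the ten values 2 cos (a pi / 5) are +-2, +-tau, +-tau'. *)

definition nat_combinations :: "(nat \<Rightarrow> 'a::semiring_1) \<Rightarrow> nat \<Rightarrow> nat \<Rightarrow> 'a set" where
  "nat_combinations g m n = {\<Sum>j<m. of_nat (c j) * g j | c. (\<Sum>j<m. c j) \<le> n}"

lemma nat_combinations_0 [simp]: "nat_combinations g m 0 = {0}"
  unfolding nat_combinations_def by (auto intro!: exI[of _ "\<lambda>_. 0"])

lemma nat_combination_increment:
  fixes g :: "nat \<Rightarrow> 'a::semiring_1" and c :: "nat \<Rightarrow> nat"
  assumes "a < m"
  defines "c' \<equiv> c(a := Suc (c a))"
  shows "(\<Sum>j<m. c' j) = Suc (\<Sum>j<m. c j)"
    and "(\<Sum>j<m. of_nat (c' j) * g j) = (\<Sum>j<m. of_nat (c j) * g j) + g a"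
proof -
  have a: "a \<in> {..<m}" using assms by simp
  have unchanged: "(\<Sum>j\<in>{..<m} - {a}. h j (c' j)) = (\<Sum>j\<in>{..<m} - {a}. h j (c j))"
    for h :: "nat \<Rightarrow> nat \<Rightarrow> 'b::comm_monoid_add"
    unfolding c'_def by (intro sum.cong) auto
  show "(\<Sum>j<m. c' j) = Suc (\<Sum>j<m. c j)"
    using sum.remove[OF _ a, of c'] sum.remove[OF _ a, of c] unchanged[of "\<lambda>_ v. v"]
    by (simp add: c'_def)
  show "(\<Sum>j<m. of_nat (c' j) * g j) = (\<Sum>j<m. of_nat (c j) * g j) + g a"
    using sum.remove[OF _ a, of "\<lambda>j. of_nat (c' j) * g j"]
      sum.remove[OF _ a, of "\<lambda>j. of_nat (c j) * g j"] unchanged[of "\<lambda>j v. of_nat v * g j"]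
    by (simp add: c'_def algebra_simps)
qed

lemma nat_combinations_Suc:
  "nat_combinations g m (Suc n) =
     nat_combinations g m n \<union> {z + g a | z a. z \<in> nat_combinations g m n \<and> a < m}"
proof (intro equalityI subsetI)
  fix z assume "z \<in> nat_combinations g m (Suc n)"
  then obtain c where z: "z = (\<Sum>j<m. of_nat (c j) * g j)" and c: "(\<Sum>j<m. c j) \<le> Suc n"
    unfolding nat_combinations_def by blast
  show "z \<in> nat_combinations g m n \<union> {z + g a | z a. z \<in> nat_combinations g m n \<and> a < m}"
  proof (cases "(\<Sum>j<m. c j) \<le> n")
    case True
    then show ?thesis using z unfolding nat_combinations_def by blast
  next
    case False
    then have "(\<Sum>j<m. c j) \<noteq> 0" by linarith
    then obtain a where a: "a < m" "c a > 0"
      using sum.not_neutral_contains_not_neutral by blast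
    define c' where "c' = c(a := c a - 1)"
    have c_eq: "c = c'(a := Suc (c' a))"
      using a by (auto simp: c'_def)
    note incr = nat_combination_increment[OF \<open>a < m\<close>, where c = c', folded c_eq]
    have "(\<Sum>j<m. of_nat (c' j) * g j) \<in> nat_combinations g m n"
      using incr(1) c unfolding nat_combinations_def by auto
    then show ?thesis using incr(2) a z by blast
  qed
next
  fix z assume "z \<in> nat_combinations g m n \<union> {z + g a | z a. z \<in> nat_combinations g m n \<and> a < m}"
  then consider "z \<in> nat_combinations g m n"
    | a w where "a < m" "w \<in> nat_combinations g m n" "z = w + g a" by blast
  then show "z \<in> nat_combinations g m (Suc n)"
  proof cases
    case 1
    then show ?thesis unfolding nat_combinations_def by force
  next
    case 2
    then obtain c where w: "w = (\<Sum>j<m. of_nat (c j) * g j)" "(\<Sum>j<m. c j) \<le> n"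
      unfolding nat_combinations_def by blast
    note incr = nat_combination_increment[OF \<open>a < m\<close>, where c = c]
    have "(\<Sum>j<m. (c(a := Suc (c a))) j) \<le> Suc n"
      using incr(1) w(2) by simp
    moreover have "z = (\<Sum>j<m. of_nat ((c(a := Suc (c a))) j) * g j)"
      using 2 w(1) incr(2)[of g] by simp
    ultimately show ?thesis unfolding nat_combinations_def by blast
  qed
qed

lemma nat_combinations_1: "nat_combinations g m 1 = insert 0 (g ` {..<m})"
  using nat_combinations_Suc[of g m 0] by auto

lemma nat_combinations_2:
  "nat_combinations g m 2 = nat_combinations g m 1 \<union> {g a + g b | a b. a < m \<and> b < m}"
proof -
  have "nat_combinations g m 2 =
      nat_combinations g m 1 \<union> {z + g b | z b. z \<in> nat_combinations g m 1 \<and> b < m}"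
    using nat_combinations_Suc[of g m 1] by (simp add: numeral_2_eq_2)
  also have "\<dots> = nat_combinations g m 1 \<union> {g a + g b | a b. a < m \<and> b < m}"
    unfolding nat_combinations_1 by force
  finally show ?thesis .
qed

lemma real_sum_equal_norm_cases:
  fixes z w :: complex
  assumes "norm z = norm w" and "z + w \<in> \<real>"
  shows "w = cnj z \<or> w = - z"
proof -
  have im: "Im w = - Im z" using assms(2) by (simp add: complex_is_Real_iff)
  have "(Re w)\<^sup>2 = (Re z)\<^sup>2"
    using assms(1) im by (simp add: norm_complex_def)
  then have "Re w = Re z \<or> Re w = - Re z" by (simp add: power2_eq_iff)
  then show ?thesis using im by (auto simp: complex_eq_iff)
qed

lemma golden_equation_iff: "x\<^sup>2 = x + 1 \<longleftrightarrow> x = tau \<or> x = tau'"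
proof -
  have "x\<^sup>2 - x - 1 = (x - tau) * (x - tau')"
    by (simp add: tau_def tau'_def field_simps power2_eq_square)
  then show ?thesis by auto
qed

lemma sqrt_5_bounds: "2 < sqrt 5" "sqrt 5 < 3"
  by (simp_all add: real_less_rsqrt real_less_lsqrt)

lemma Q2_eq_nat_combinations: "Q2 n = nat_combinations (\<lambda>j. xi ^ j) 10 n"
  unfolding Q2_def nat_combinations_def by blast

lemma Q2_1: "Q2 1 = insert 0 ((\<lambda>a. xi ^ a) ` {..<10})"
  unfolding Q2_eq_nat_combinations nat_combinations_1 ..

lemma Q2_2: "Q2 2 = Q2 1 \<union> {xi ^ a + xi ^ b | a b. a < 10 \<and> b < 10}"
  by (simp add: Q2_eq_nat_combinations nat_combinations_2)

lemma xi_power: "xi ^ k = cis (real k * pi / 5)"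
  unfolding xi_def by (simp add: cis_conv_exp exp_of_nat_mult[symmetric] mult_ac)

lemma norm_xi_power [simp]: "norm (xi ^ k) = 1"
  by (simp add: xi_power)

lemma xi_power_10: "xi ^ 10 = 1"
  by (simp add: xi_power)

lemma xi_power_mod_10: "xi ^ k = xi ^ (k mod 10)"
proof -
  have "xi ^ k = (xi ^ 10) ^ (k div 10) * xi ^ (k mod 10)"
    by (simp only: power_mult[symmetric] power_add[symmetric] mult_div_mod_eq)
  then show ?thesis by (simp add: xi_power_10)
qed

lemma cnj_xi_power: "cnj (xi ^ a) = xi ^ (9 * a mod 10)"
proof -
  have "xi ^ a * xi ^ (9 * a) = (xi ^ 10) ^ a"
    by (simp add: power_add[symmetric] power_mult[symmetric])
  then have "xi ^ a * xi ^ (9 * a) = 1"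
    by (simp add: xi_power_10)
  moreover have "xi ^ a * cnj (xi ^ a) = 1"
    using complex_norm_square[of "xi ^ a"] by simp
  ultimately have "cnj (xi ^ a) = xi ^ (9 * a)"
    using inverse_unique by metis
  then show ?thesis
    using xi_power_mod_10[of "9 * a"] by simp
qed

lemma Re_xi_power: "Re (xi ^ k) = cos (real k * pi / 5)"
  by (simp add: xi_power)

lemma cos_pi_div_5: "cos (pi / 5) = tau / 2"
proof -
  define c where "c = cos (pi / 5)"
  have "c > 0" unfolding c_def by (rule cos_gt_zero) auto
  have "cos (3 * (pi / 5)) = - cos (2 * (pi / 5))"
    using cos_pi_minus[of "2 * (pi / 5)"] by (simp add: field_simps)
  then have "4 * c ^ 3 - 3 * c = - (2 * c\<^sup>2 - 1)"
    unfolding c_def cos_treble_cos cos_double_cos by simp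
  then have "(c + 1) * ((2 * c)\<^sup>2 - (2 * c + 1)) = 0"
    by (simp add: algebra_simps power2_eq_square power3_eq_cube)
  with \<open>c > 0\<close> have "(2 * c)\<^sup>2 = 2 * c + 1" by simp
  moreover have "tau' < 0" using sqrt_5_bounds by (simp add: tau'_def)
  ultimately show ?thesis
    using \<open>c > 0\<close> unfolding golden_equation_iff c_def by auto
qed

lemma cos_2pi_div_5: "cos (2 * pi / 5) = - tau' / 2"
proof -
  have "cos (2 * pi / 5) = 2 * (tau / 2)\<^sup>2 - 1"
    using cos_double_cos[of "pi / 5"] by (simp add: cos_pi_div_5)
  also have "\<dots> = - tau' / 2"
    by (simp add: tau_def tau'_def power2_eq_square field_simps)
  finally show ?thesis .
qed

lemma two_cos_multiples_pi_div_5: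
  "(\<lambda>a. 2 * cos (real a * pi / 5)) ` {..<10} = {2, -2, tau, -tau, tau', -tau'}"
proof -
  have minus: "cos (real a * pi / 5) = - cos (real (5 - a) * pi / 5)" if "a \<le> 5" for a
    using cos_pi_minus[of "real (5 - a) * pi / 5"] that by (simp add: of_nat_diff field_simps)
  have reflect: "cos (real a * pi / 5) = cos (real (10 - a) * pi / 5)" if "a \<le> 10" for a
    using cos_2pi_minus[of "real (10 - a) * pi / 5"] that by (simp add: of_nat_diff field_simps)
  have ten: "{..<10::nat} = {0, 1, 2, 3, 4, 5, 6, 7, 8, 9}" by auto
  have "cos (3 * pi / 5) = tau' / 2" "cos (4 * pi / 5) = - tau / 2"
    using minus[of 3] minus[of 4] by (simp_all add: cos_pi_div_5 cos_2pi_div_5)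
  moreover have "cos (6 * pi / 5) = - tau / 2" "cos (7 * pi / 5) = tau' / 2"
    "cos (8 * pi / 5) = - tau' / 2" "cos (9 * pi / 5) = tau / 2"
    using reflect[of 6] reflect[of 7] reflect[of 8] reflect[of 9] calculation
    by (simp_all add: cos_pi_div_5 cos_2pi_div_5)
  ultimately show ?thesis
    unfolding ten by (auto simp: cos_pi_div_5 cos_2pi_div_5)
qed

lemma L_1: "L 1 = {0, 1, -1}"
proof (intro equalityI subsetI)
  fix x assume "x \<in> L 1"
  then consider "x = 0" | a where "complex_of_real x = xi ^ a"
    unfolding L_def Q2_1 by auto
  then show "x \<in> {0, 1, -1}"
  proof cases
    case (2 a)
    then have "\<bar>x\<bar> = 1" using norm_xi_power[of a] by (metis norm_of_real)
    then show ?thesis by auto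
  qed simp
next
  fix x :: real assume "x \<in> {0, 1, -1}"
  then have "complex_of_real x \<in> insert 0 ((\<lambda>a. xi ^ a) ` {0, 5})"
    by (auto simp: xi_power)
  moreover have "insert 0 ((\<lambda>a. xi ^ a) ` {0, 5}) \<subseteq> Q2 1"
    unfolding Q2_1 by (intro insert_mono image_mono) auto
  ultimately show "x \<in> L 1" unfolding L_def by blast
qed

lemma L_2: "L 2 = L 1 \<union> (\<lambda>a. 2 * cos (real a * pi / 5)) ` {..<10}"
proof (intro equalityI subsetI)
  fix x assume "x \<in> L 2"
  then consider "x \<in> L 1" | a b where "a < 10" "complex_of_real x = xi ^ a + xi ^ b"
    unfolding L_def Q2_2 by blast
  then show "x \<in> L 1 \<union> (\<lambda>a. 2 * cos (real a * pi / 5)) ` {..<10}"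
  proof cases
    case (2 a b)
    then have "xi ^ b = cnj (xi ^ a) \<or> xi ^ b = - (xi ^ a)"
      by (intro real_sum_equal_norm_cases) (simp, metis Reals_of_real)
    then show ?thesis
    proof
      assume "xi ^ b = cnj (xi ^ a)"
      then have "complex_of_real x = complex_of_real (2 * Re (xi ^ a))"
        using 2(2) by (simp only: complex_add_cnj)
      then have "x = 2 * cos (real a * pi / 5)"
        by (simp only: of_real_eq_iff Re_xi_power)
      then show ?thesis
        using \<open>a < 10\<close> by (intro UnI2 image_eqI[where x = a]) simp_all
    next
      assume "xi ^ b = - (xi ^ a)"
      then have "x = 0" using 2(2) by simp
      then show ?thesis unfolding L_1 by simp
    qed
  qed simp
next
  fix x assume "x \<in> L 1 \<union> (\<lambda>a. 2 * cos (real a * pi / 5)) ` {..<10}"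
  then consider "x \<in> L 1" | a where "a < 10" "x = 2 * cos (real a * pi / 5)"
    by blast
  then show "x \<in> L 2"
  proof cases
    case 1
    then show ?thesis unfolding L_def Q2_2 by blast
  next
    case (2 a)
    have "complex_of_real x = xi ^ a + cnj (xi ^ a)"
      unfolding 2(2) complex_add_cnj Re_xi_power ..
    then have "complex_of_real x = xi ^ a + xi ^ (9 * a mod 10)"
      unfolding cnj_xi_power .
    moreover have "9 * a mod 10 < 10" by simp
    ultimately show ?thesis
      using \<open>a < 10\<close> unfolding L_def Q2_2 by blast
  qed
qed

theorem proposition6p3:
  shows "L 2 - L 1 = {2, -2, tau, -tau, tau', -tau'}"
proof -
  have "{2, -2, tau, -tau, tau', -tau'} \<inter> {0, 1, -1} = {}"
    using sqrt_5_bounds by (auto simp: tau_def tau'_def)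
  then show ?thesis
    unfolding L_2 two_cos_multiples_pi_div_5 L_1 by blast
qed

end
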